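(* Let $A_S$ be a parabolic-retractable Artin group with Coxeter matrix $(m_{s,t})_{s,t\in S}$, and let $a,b,c\in S$ be pairwise distinct. If $m_{a,b}$ and $m_{a,c}$ are odd, then $m_{b,c}$ is also odd.
   Context: A Coxeter matrix over a finite set $S$ is a matrix $M=(m_{s,t})_{s,t\in S}$ with entries in $\mathbb{N}\cup\{\infty\}$, $m_{s,s}=1$, and $m_{s,t}=m_{t,s}\ge 2$ for $s\neq t$. Write $\Pi(s,t,m)$ for the alternating word $sts\cdots$ of length $m$. The Artin group is $A_S=\langle S\mid \Pi(s,t,m_{s,t})=\Pi(t,s,m_{s,t})$ for $s\neq t$, $m_{s,t}\neq\infty\rangle$. For $X\subseteq S$, $A_X$ is the subgroup generated by $X$. A retraction of $G$ onto a subgroup $H$ is a homomorphism $\varphi:G\to H$ with $\varphi|_H=\mathrm{id}_H$. $A_S$ is parabolic-retractable if it admits a retraction onto $A_X$ for every $X\subseteq S$. "Odd" means a finite odd integer ($\infty$ is not odd). *)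

theory Defs
  imports "HOL-Library.Extended_Nat" "HOL-Algebra.Generated_Groups"
begin

definition coxeter_matrix :: "'a set \<Rightarrow> ('a \<Rightarrow> 'a \<Rightarrow> enat) \<Rightarrow> bool" where
  "coxeter_matrix S M \<longleftrightarrow>
     (\<forall>s\<in>S. M s s = 1) \<and>
     (\<forall>s\<in>S. \<forall>t\<in>S. M s t = M t s) \<and>
     (\<forall>s\<in>S. \<forall>t\<in>S. s \<noteq> t \<longrightarrow> M s t \<ge> 2)"

definition odd_entry :: "enat \<Rightarrow> bool" where
  "odd_entry m \<longleftrightarrow> (\<exists>k::nat. m = enat k \<and> odd k)"

text \<open>Words in the generators and their inverses: (s, True) is s, (s, False) is s^-1.\<close>
definition words :: "'a set \<Rightarrow> ('a \<times> bool) list set" where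
  "words S = lists (S \<times> UNIV)"

definition alt_word :: "'a \<Rightarrow> 'a \<Rightarrow> nat \<Rightarrow> ('a \<times> bool) list" where
  "alt_word s t m = map (\<lambda>i. (if even i then s else t, True)) [0..<m]"

inductive artin_eq :: "'a set \<Rightarrow> ('a \<Rightarrow> 'a \<Rightarrow> enat) \<Rightarrow> ('a \<times> bool) list \<Rightarrow> ('a \<times> bool) list \<Rightarrow> bool"
  for S M where
  refl: "w \<in> words S \<Longrightarrow> artin_eq S M w w"
| sym: "artin_eq S M w v \<Longrightarrow> artin_eq S M v w"
| trans: "artin_eq S M u v \<Longrightarrow> artin_eq S M v w \<Longrightarrow> artin_eq S M u w"
| cancel: "u \<in> words S \<Longrightarrow> v \<in> words S \<Longrightarrow> s \<in> S \<Longrightarrow>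
     artin_eq S M (u @ [(s, e), (s, \<not> e)] @ v) (u @ v)"
| braid: "u \<in> words S \<Longrightarrow> v \<in> words S \<Longrightarrow> s \<in> S \<Longrightarrow> t \<in> S \<Longrightarrow> s \<noteq> t \<Longrightarrow>
     M s t = enat m \<Longrightarrow>
     artin_eq S M (u @ alt_word s t m @ v) (u @ alt_word t s m @ v)"

definition artin_class :: "'a set \<Rightarrow> ('a \<Rightarrow> 'a \<Rightarrow> enat) \<Rightarrow> ('a \<times> bool) list \<Rightarrow> ('a \<times> bool) list set" where
  "artin_class S M w = {v. artin_eq S M w v}"

definition artin_group :: "'a set \<Rightarrow> ('a \<Rightarrow> 'a \<Rightarrow> enat) \<Rightarrow> ('a \<times> bool) list set monoid" where
  "artin_group S M =
     \<lparr> carrier = artin_class S M ` words S,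
       mult = (\<lambda>A B. \<Union>{artin_class S M (a @ b) | a b. a \<in> A \<and> b \<in> B}),
       one = artin_class S M [] \<rparr>"

definition parabolic :: "'a set \<Rightarrow> ('a \<Rightarrow> 'a \<Rightarrow> enat) \<Rightarrow> 'a set \<Rightarrow> ('a \<times> bool) list set set" where
  "parabolic S M X = generate (artin_group S M) ((\<lambda>x. artin_class S M [(x, True)]) ` X)"

definition retraction_onto :: "'g monoid \<Rightarrow> 'g set \<Rightarrow> ('g \<Rightarrow> 'g) \<Rightarrow> bool" where
  "retraction_onto G H \<phi> \<longleftrightarrow> \<phi> \<in> hom G (G\<lparr>carrier := H\<rparr>) \<and> (\<forall>h\<in>H. \<phi> h = h)"

definition parabolic_retractable :: "'a set \<Rightarrow> ('a \<Rightarrow> 'a \<Rightarrow> enat) \<Rightarrow> bool" where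
  "parabolic_retractable S M \<longleftrightarrow>
     (\<forall>X\<subseteq>S. \<exists>\<phi>. retraction_onto (artin_group S M) (parabolic S M X) \<phi>)"

end

theory Submission
  imports Defs Complex_Main
begin

(* A retraction of A_S onto A_{b,c} sends a to the class of a word x in b and c, and the
   braid relations of odd length between a and b, and between a and c, become relations
   between x and b, and between x and c, in A_S. When m_{b,c} is not odd, the parity of the
   number of letters b is an invariant of words in b and c: in the reflection representation
   of A_S on R^S in which every label that is not odd is replaced by 2, b negates e_b while
   c fixes it. An alternating relation of odd length forces x to have the b-parity of b and
   also that of c, which is impossible. *)

definition alternating :: "'b \<Rightarrow> 'b \<Rightarrow> nat \<Rightarrow> 'b list" where
  "alternating x y n = map (\<lambda>i. if even i then x else y) [0..<n]"

lemma alternating_0 [simp]: "alternating x y 0 = []"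
  by (simp add: alternating_def)

lemma alternating_Suc: "alternating x y (Suc n) = x # alternating y x n"
proof -
  have "[0..<Suc n] = 0 # map Suc [0..<n]"
    by (simp add: map_Suc_upt upt_conv_Cons del: upt_Suc)
  then show ?thesis
    by (simp add: alternating_def comp_def)
qed

lemma map_alternating: "map f (alternating x y n) = alternating (f x) (f y) n"
  by (simp add: alternating_def)

lemma set_alternating_subset: "set (alternating x y n) \<subseteq> {x, y}"
  by (auto simp: alternating_def)

lemma alt_word_eq_alternating: "alt_word s t m = alternating (s, True) (t, True) m"
  by (simp add: alt_word_def alternating_def if_distrib)

lemma sum_list_alternating_odd:
  fixes x y :: "'b :: comm_monoid_add"
  shows "sum_list (alternating x y (Suc (2 * k))) + y =
         sum_list (alternating y x (Suc (2 * k))) + x"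
proof -
  have "sum_list (alternating x y (2 * k)) = sum_list (alternating y x (2 * k))"
    by (induction k) (simp_all add: alternating_Suc ac_simps)
  then show ?thesis
    by (simp add: alternating_Suc ac_simps)
qed

section \<open>The Artin group\<close>

lemma words_append [simp]: "u @ v \<in> words S \<longleftrightarrow> u \<in> words S \<and> v \<in> words S"
  by (auto simp: words_def)

lemma words_Cons [simp]: "l # v \<in> words S \<longleftrightarrow> fst l \<in> S \<and> v \<in> words S"
  by (cases l) (auto simp: words_def)

lemma words_Nil [simp]: "[] \<in> words S"
  by (simp add: words_def)

lemma alt_word_in_words: "s \<in> S \<Longrightarrow> t \<in> S \<Longrightarrow> alt_word s t m \<in> words S"
  using set_alternating_subset[of "(s, True)" "(t, True)" m]
  by (auto simp: alt_word_eq_alternating words_def)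

lemma artin_eq_in_words: "artin_eq S M w v \<Longrightarrow> w \<in> words S \<and> v \<in> words S"
  by (induction rule: artin_eq.induct) (auto simp: alt_word_in_words)

lemma artin_eq_append_cong:
  "artin_eq S M w v \<Longrightarrow> x \<in> words S \<Longrightarrow> y \<in> words S \<Longrightarrow>
    artin_eq S M (x @ w @ y) (x @ v @ y)"
proof (induction rule: artin_eq.induct)
  case (refl w)
  then show ?case by (auto intro: artin_eq.refl)
next
  case (sym w v)
  then show ?case by (auto intro: artin_eq.sym)
next
  case (trans u v w)
  then show ?case by (blast intro: artin_eq.trans)
next
  case (cancel u v s e)
  then have "artin_eq S M ((x @ u) @ [(s, e), (s, \<not> e)] @ (v @ y)) ((x @ u) @ (v @ y))"
    by (intro artin_eq.cancel) auto
  then show ?case by simp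
next
  case (braid u v s t m)
  then have "artin_eq S M ((x @ u) @ alt_word s t m @ (v @ y)) ((x @ u) @ alt_word t s m @ (v @ y))"
    by (intro artin_eq.braid) auto
  then show ?case by simp
qed

lemma artin_class_eq_iff:
  "w \<in> words S \<Longrightarrow> artin_class S M w = artin_class S M v \<longleftrightarrow> artin_eq S M w v"
  unfolding artin_class_def by (auto intro: artin_eq.refl artin_eq.sym artin_eq.trans)

lemma carrier_artin_group: "carrier (artin_group S M) = artin_class S M ` words S"
  by (simp add: artin_group_def)

lemma one_artin_group: "\<one>\<^bsub>artin_group S M\<^esub> = artin_class S M []"
  by (simp add: artin_group_def)

lemma mult_artin_class:
  assumes "u \<in> words S" "v \<in> words S"
  shows "artin_class S M u \<otimes>\<^bsub>artin_group S M\<^esub> artin_class S M v = artin_class S M (u @ v)"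
proof -
  have "artin_class S M (u' @ v') = artin_class S M (u @ v)"
    if "artin_eq S M u u'" "artin_eq S M v v'" for u' v'
  proof -
    have "artin_eq S M (u @ v) (u' @ v)"
      using artin_eq_append_cong[OF that(1), of "[]" v] assms by simp
    moreover have "artin_eq S M (u' @ v) (u' @ v')"
      using artin_eq_append_cong[OF that(2), of u' "[]"] artin_eq_in_words[OF that(1)] by simp
    ultimately have "artin_eq S M (u @ v) (u' @ v')"
      by (rule artin_eq.trans)
    then show ?thesis
      using assms by (subst eq_commute) (simp add: artin_class_eq_iff)
  qed
  moreover have "artin_eq S M u u" "artin_eq S M v v"
    using assms by (auto intro: artin_eq.refl)
  ultimately have "{artin_class S M (u' @ v') |u' v'. u' \<in> artin_class S M u \<and> v' \<in> artin_class S M v}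
      = {artin_class S M (u @ v)}"
    unfolding artin_class_def by blast
  then show ?thesis
    by (simp add: artin_group_def)
qed

definition word_inverse :: "('a \<times> bool) list \<Rightarrow> ('a \<times> bool) list" where
  "word_inverse w = rev (map (\<lambda>(s, e). (s, \<not> e)) w)"

lemma word_inverse_in_words: "w \<in> words S \<Longrightarrow> word_inverse w \<in> words S"
  by (auto simp: word_inverse_def words_def)

lemma artin_eq_word_inverse_append: "w \<in> words S \<Longrightarrow> artin_eq S M (word_inverse w @ w) []"
proof (induction w)
  case Nil
  then show ?case by (simp add: word_inverse_def artin_eq.refl)
next
  case (Cons l w)
  obtain s e where l: "l = (s, e)"
    by fastforce
  with Cons.prems have "s \<in> S" "w \<in> words S"
    by auto
  then have "artin_eq S M (word_inverse w @ [(s, \<not> e), (s, \<not> \<not> e)] @ w) (word_inverse w @ w)"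
    by (intro artin_eq.cancel) (auto simp: word_inverse_in_words)
  then have "artin_eq S M (word_inverse (l # w) @ l # w) (word_inverse w @ w)"
    by (simp add: l word_inverse_def)
  with Cons.IH \<open>w \<in> words S\<close> show ?case
    by (blast intro: artin_eq.trans)
qed

lemma group_artin_group: "group (artin_group S M)"
proof (rule groupI)
  fix x y
  assume "x \<in> carrier (artin_group S M)" "y \<in> carrier (artin_group S M)"
  then show "x \<otimes>\<^bsub>artin_group S M\<^esub> y \<in> carrier (artin_group S M)"
    by (auto simp: carrier_artin_group mult_artin_class)
next
  show "\<one>\<^bsub>artin_group S M\<^esub> \<in> carrier (artin_group S M)"
    by (simp add: carrier_artin_group one_artin_group)
next
  fix x y z
  assume "x \<in> carrier (artin_group S M)" "y \<in> carrier (artin_group S M)" "z \<in> carrier (artin_group S M)"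
  then show "x \<otimes>\<^bsub>artin_group S M\<^esub> y \<otimes>\<^bsub>artin_group S M\<^esub> z =
      x \<otimes>\<^bsub>artin_group S M\<^esub> (y \<otimes>\<^bsub>artin_group S M\<^esub> z)"
    by (auto simp: carrier_artin_group mult_artin_class)
next
  fix x
  assume "x \<in> carrier (artin_group S M)"
  then obtain u where u: "u \<in> words S" "x = artin_class S M u"
    by (auto simp: carrier_artin_group)
  then show "\<one>\<^bsub>artin_group S M\<^esub> \<otimes>\<^bsub>artin_group S M\<^esub> x = x"
    using mult_artin_class[of "[]" S u M] by (simp add: one_artin_group)
  have "artin_class S M (word_inverse u) \<otimes>\<^bsub>artin_group S M\<^esub> x = \<one>\<^bsub>artin_group S M\<^esub>"
    using u artin_eq_word_inverse_append[OF u(1), of M] word_inverse_in_words[OF u(1)]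
    by (simp add: mult_artin_class one_artin_group artin_class_eq_iff)
  moreover have "artin_class S M (word_inverse u) \<in> carrier (artin_group S M)"
    using word_inverse_in_words[OF u(1)] by (simp add: carrier_artin_group)
  ultimately show "\<exists>y\<in>carrier (artin_group S M). y \<otimes>\<^bsub>artin_group S M\<^esub> x = \<one>\<^bsub>artin_group S M\<^esub>"
    by blast
qed

lemma inv_artin_class_letter:
  assumes "s \<in> S"
  shows "inv\<^bsub>artin_group S M\<^esub> (artin_class S M [(s, True)]) = artin_class S M [(s, False)]"
proof (rule group.inv_equality[OF group_artin_group])
  have "artin_eq S M ([] @ [(s, False), (s, \<not> False)] @ []) ([] @ [])"
    using assms by (intro artin_eq.cancel) auto
  then show "artin_class S M [(s, False)] \<otimes>\<^bsub>artin_group S M\<^esub> artin_class S M [(s, True)] =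
      \<one>\<^bsub>artin_group S M\<^esub>"
    using assms by (simp add: mult_artin_class one_artin_group artin_class_eq_iff)
qed (use assms in \<open>simp_all add: carrier_artin_group\<close>)

lemma parabolic_subset_classes:
  assumes "X \<subseteq> S"
  shows "parabolic S M X \<subseteq> artin_class S M ` lists (X \<times> UNIV)"
proof
  fix h
  assume "h \<in> parabolic S M X"
  then show "h \<in> artin_class S M ` lists (X \<times> UNIV)"
    unfolding parabolic_def
  proof (induction rule: generate.induct)
    case one
    show ?case
      by (auto simp: one_artin_group)
  next
    case (incl h)
    then obtain x where "x \<in> X" "h = artin_class S M [(x, True)]"
      by auto
    then show ?case
      by (intro image_eqI[of _ _ "[(x, True)]"]) auto
  next
    case (inv h)
    then obtain x where "x \<in> X" "h = artin_class S M [(x, True)]"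
      by auto
    with assms show ?case
      by (intro image_eqI[of _ _ "[(x, False)]"]) (auto simp: inv_artin_class_letter)
  next
    case (eng h1 h2)
    then obtain w1 w2 where "w1 \<in> lists (X \<times> UNIV)" "w2 \<in> lists (X \<times> UNIV)"
      "h1 = artin_class S M w1" "h2 = artin_class S M w2"
      by auto
    moreover from this assms have "w1 \<in> words S" "w2 \<in> words S"
      by (auto simp: words_def)
    ultimately show ?case
      by (intro image_eqI[of _ _ "w1 @ w2"]) (auto simp: mult_artin_class)
  qed
qed

lemma parabolic_subset_carrier:
  assumes "X \<subseteq> S"
  shows "parabolic S M X \<subseteq> carrier (artin_group S M)"
proof -
  have "lists (X \<times> UNIV) \<subseteq> words S"
    using assms by (auto simp: words_def)
  with parabolic_subset_classes[OF assms] show ?thesis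
    unfolding carrier_artin_group by (meson image_mono order_trans)
qed

lemma foldr_artin_eq:
  assumes involutive: "\<And>s x. s \<in> S \<Longrightarrow> \<rho> s (\<rho> s x) = x"
    and braid: "\<And>s t m. s \<in> S \<Longrightarrow> t \<in> S \<Longrightarrow> s \<noteq> t \<Longrightarrow> M s t = enat m \<Longrightarrow>
      foldr \<rho> (alternating s t m) = foldr \<rho> (alternating t s m)"
    and "artin_eq S M w w'"
  shows "foldr \<rho> (map fst w) = foldr \<rho> (map fst w')"
  using assms(3)
proof (induction rule: artin_eq.induct)
  case (cancel u v s e)
  then show ?case
    by (simp add: fun_eq_iff involutive)
next
  case (braid u v s t m)
  then show ?case
    using assms(2)[of s t m] by (simp add: alt_word_eq_alternating map_alternating)
qed simp_all

section \<open>Reflections\<close>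

definition line_reflection :: "real \<Rightarrow> complex \<Rightarrow> complex" where
  "line_reflection \<alpha> z = cis (2 * \<alpha>) * cnj z"

lemma foldr_line_reflection_alternating:
  "foldr line_reflection (alternating \<alpha> \<gamma> n) z =
     (if even n then cis (real n * (\<alpha> - \<gamma>)) * z
      else cis ((real n - 1) * (\<alpha> - \<gamma>) + 2 * \<alpha>) * cnj z)"
proof (induction n arbitrary: \<alpha> \<gamma>)
  case 0
  then show ?case by simp
next
  case (Suc n)
  have "foldr line_reflection (alternating \<alpha> \<gamma> (Suc n)) z =
      line_reflection \<alpha> (foldr line_reflection (alternating \<gamma> \<alpha> n) z)"
    by (simp add: alternating_Suc)
  also have "\<dots> = (if even (Suc n) then cis (real (Suc n) * (\<alpha> - \<gamma>)) * z
      else cis ((real (Suc n) - 1) * (\<alpha> - \<gamma>) + 2 * \<alpha>) * cnj z)"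
    unfolding Suc.IH line_reflection_def
    by (cases "even n") (simp_all add: cis_cnj cis_mult algebra_simps)
  finally show ?case .
qed

lemma cis_double_eq_1: "sin x = 0 \<Longrightarrow> cis (2 * x) = 1"
  by (simp add: complex_eq_iff cos_double_sin sin_double)

lemma line_reflection_braid:
  assumes "sin (real m * (\<alpha> - \<gamma>)) = 0"
  shows "foldr line_reflection (alternating \<alpha> \<gamma> m) =
         foldr line_reflection (alternating \<gamma> \<alpha> m)"
proof
  fix z
  have "cis (2 * (real m * (\<alpha> - \<gamma>))) = 1"
    using assms by (rule cis_double_eq_1)
  then have "cis a = cis b" if "a = b + 2 * (real m * (\<alpha> - \<gamma>))" for a b
    using that cis_mult[of b "2 * (real m * (\<alpha> - \<gamma>))"] by simp
  then show "foldr line_reflection (alternating \<alpha> \<gamma> m) z =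
      foldr line_reflection (alternating \<gamma> \<alpha> m) z"
    unfolding foldr_line_reflection_alternating by (simp add: algebra_simps)
qed

definition form_coord :: "'a set \<Rightarrow> ('a \<Rightarrow> 'a \<Rightarrow> real) \<Rightarrow> 'a \<Rightarrow> ('a \<Rightarrow> real) \<Rightarrow> real" where
  "form_coord S B s v = (\<Sum>u\<in>S. B s u * v u)"

definition form_reflection :: "'a set \<Rightarrow> ('a \<Rightarrow> 'a \<Rightarrow> real) \<Rightarrow> 'a \<Rightarrow> ('a \<Rightarrow> real) \<Rightarrow> 'a \<Rightarrow> real" where
  "form_reflection S B s v = v(s := v s - 2 * form_coord S B s v)"

lemma form_coord_fun_upd:
  assumes "finite S" "s \<in> S"
  shows "form_coord S B u (v(s := x)) = form_coord S B u v + B u s * (x - v s)"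
proof -
  have "form_coord S B u (v(s := x)) = B u s * x + (\<Sum>w\<in>S - {s}. B u w * v w)"
    using assms by (simp add: form_coord_def sum.remove)
  also have "\<dots> = form_coord S B u v + B u s * (x - v s)"
    using assms by (simp add: form_coord_def sum.remove algebra_simps)
  finally show ?thesis .
qed

lemma form_coord_reflection:
  assumes "finite S" "s \<in> S"
  shows "form_coord S B u (form_reflection S B s v) = form_coord S B u v - 2 * B u s * form_coord S B s v"
  using assms by (simp add: form_reflection_def form_coord_fun_upd)

lemma form_reflection_involutive:
  assumes "finite S" "s \<in> S" "B s s = 1"
  shows "form_reflection S B s (form_reflection S B s v) = v"
  using assms by (simp add: form_reflection_def form_coord_fun_upd)

lemma foldr_form_reflection_notin:
  "u \<notin> set xs \<Longrightarrow> foldr (form_reflection S B) xs v u = v u"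
  by (induction xs) (auto simp: form_reflection_def)

locale reflection_pair =
  fixes S :: "'a set" and B :: "'a \<Rightarrow> 'a \<Rightarrow> real" and s t :: 'a and \<theta> :: real
  assumes finite: "finite S" and s_in: "s \<in> S" and t_in: "t \<in> S" and s_ne_t: "s \<noteq> t"
    and B_ss: "B s s = 1" and B_tt: "B t t = 1"
    and B_st: "B s t = - cos \<theta>" and B_ts: "B t s = - cos \<theta>"
    and sin_ne_0: "sin \<theta> \<noteq> 0"
begin

(* The reflections in s and t only move v along e_s and e_t, and this functional is injective
   on span {e_s, e_t} because sin \<theta> \<noteq> 0; it turns them into the reflections of the complex
   plane in lines at angles 0 and \<theta>. *)
definition plane_coord :: "('a \<Rightarrow> real) \<Rightarrow> complex" where
  "plane_coord v = cis \<theta> * form_coord S B s v + form_coord S B t v"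

lemma plane_coord_reflection_s:
  "plane_coord (form_reflection S B s v) = line_reflection 0 (plane_coord v)"
  using finite s_in
  by (simp add: plane_coord_def form_coord_reflection line_reflection_def B_ss B_ts
      complex_eq_iff algebra_simps)

lemma plane_coord_reflection_t:
  "plane_coord (form_reflection S B t v) = line_reflection \<theta> (plane_coord v)"
proof -
  define P where "P = complex_of_real (form_coord S B s v)"
  define Q where "Q = complex_of_real (form_coord S B t v)"
  have "plane_coord (form_reflection S B t v) = cis \<theta> * P + (2 * cos \<theta> * cis \<theta> - 1) * Q"
    using finite t_in
    by (simp add: plane_coord_def form_coord_reflection B_tt B_st P_def Q_def algebra_simps)
  also have "2 * cos \<theta> * cis \<theta> - 1 = cis (2 * \<theta>)"
    by (simp add: complex_eq_iff cos_double_cos sin_double power2_eq_square)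
  also have "cis \<theta> = cis (2 * \<theta>) * cis (- \<theta>)"
    by (simp add: cis_mult)
  also have "cis (2 * \<theta>) * cis (- \<theta>) * P + cis (2 * \<theta>) * Q = line_reflection \<theta> (plane_coord v)"
    by (simp add: line_reflection_def plane_coord_def P_def Q_def cis_cnj algebra_simps)
  finally show ?thesis .
qed

lemma plane_coord_eq_imp_eq:
  assumes agree: "\<And>u. u \<notin> {s, t} \<Longrightarrow> v u = v' u"
    and eq: "plane_coord v = plane_coord v'"
  shows "v = v'"
proof -
  define a where "a = v s - v' s"
  define b where "b = v t - v' t"
  have v: "v = v'(s := v s, t := v t)"
    using agree by auto
  have coord: "form_coord S B u v = form_coord S B u v' + B u s * a + B u t * b" for u
    using finite s_in t_in s_ne_t
    by (subst v) (simp add: form_coord_fun_upd a_def b_def)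
  have "cis \<theta> * (a - cos \<theta> * b) + (b - cos \<theta> * a) = 0"
    using eq by (simp add: plane_coord_def coord B_ss B_st B_ts B_tt algebra_simps)
  then have im: "sin \<theta> * (a - cos \<theta> * b) = 0"
    and re: "cos \<theta> * (a - cos \<theta> * b) + (b - cos \<theta> * a) = 0"
    by (simp_all add: complex_eq_iff)
  from im sin_ne_0 have "a = cos \<theta> * b"
    by simp
  with re have "(1 - cos \<theta> ^ 2) * b = 0"
    by (simp add: algebra_simps power2_eq_square)
  then have "sin \<theta> ^ 2 * b = 0"
    by (simp add: sin_squared_eq)
  with sin_ne_0 \<open>a = cos \<theta> * b\<close> have "a = 0" "b = 0"
    by simp_all
  then show ?thesis
    by (subst v) (simp add: a_def b_def)
qed

lemma plane_coord_foldr: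
  "set xs \<subseteq> {s, t} \<Longrightarrow>
    plane_coord (foldr (form_reflection S B) xs v) =
    foldr line_reflection (map (\<lambda>u. if u = s then 0 else \<theta>) xs) (plane_coord v)"
  by (induction xs) (auto simp: plane_coord_reflection_s plane_coord_reflection_t)

lemma braid_relation:
  assumes "sin (real m * \<theta>) = 0"
  shows "foldr (form_reflection S B) (alternating s t m) =
         foldr (form_reflection S B) (alternating t s m)"
proof
  fix v
  let ?l = "foldr (form_reflection S B) (alternating s t m) v"
  let ?r = "foldr (form_reflection S B) (alternating t s m) v"
  have "foldr line_reflection (alternating 0 \<theta> m) = foldr line_reflection (alternating \<theta> 0 m)"
    using assms by (intro line_reflection_braid) simp
  then have "plane_coord ?l = plane_coord ?r"
    using set_alternating_subset[of s t m] set_alternating_subset[of t s m] s_ne_t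
    by (simp add: plane_coord_foldr map_alternating insert_commute)
  moreover have "?l u = ?r u" if "u \<notin> {s, t}" for u
  proof -
    have "u \<notin> set (alternating s t m)" "u \<notin> set (alternating t s m)"
      using that set_alternating_subset[of s t m] set_alternating_subset[of t s m] by auto
    then show ?thesis
      by (simp add: foldr_form_reflection_notin)
  qed
  ultimately show "?l = ?r"
    using plane_coord_eq_imp_eq by blast
qed

end

section \<open>The reflection representation\<close>

(* Labels that are not odd are treated as 2, so the corresponding reflections commute; this still
   satisfies the braid relation of every even length. The diagonal label 1 gives the angle pi,
   hence tits_form M s s = 1. *)
definition coxeter_angle :: "enat \<Rightarrow> real" where
  "coxeter_angle m = (if odd_entry m then pi / real (the_enat m) else pi / 2)"

definition tits_form :: "('a \<Rightarrow> 'a \<Rightarrow> enat) \<Rightarrow> 'a \<Rightarrow> 'a \<Rightarrow> real" where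
  "tits_form M s t = - cos (coxeter_angle (M s t))"

lemma tits_form_diag: "M s s = 1 \<Longrightarrow> tits_form M s s = 1"
  by (simp add: tits_form_def coxeter_angle_def odd_entry_def one_enat_def)

lemma tits_form_not_odd: "\<not> odd_entry (M s t) \<Longrightarrow> tits_form M s t = 0"
  by (simp add: tits_form_def coxeter_angle_def)

lemma sin_coxeter_angle_ne_0:
  assumes "m \<ge> 2"
  shows "sin (coxeter_angle m) \<noteq> 0"
proof (cases "odd_entry m")
  case True
  then obtain k where k: "m = enat k" "odd k"
    by (auto simp: odd_entry_def)
  with assms have "k \<ge> 2"
    by (simp add: numeral_eq_enat)
  then have "0 < pi / real k" "pi / real k < pi"
    by (simp_all add: divide_less_eq)
  moreover have "coxeter_angle m = pi / real k"
    using True k by (simp add: coxeter_angle_def)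
  ultimately show ?thesis
    using sin_gt_zero by (metis less_irrefl)
next
  case False
  then show ?thesis
    by (simp add: coxeter_angle_def)
qed

lemma sin_mult_coxeter_angle: "sin (real m * coxeter_angle (enat m)) = 0"
proof (cases "odd m")
  case True
  with odd_pos have "m \<noteq> 0" by blast
  with True show ?thesis
    by (simp add: coxeter_angle_def odd_entry_def)
next
  case False
  then obtain k where "m = 2 * k" by auto
  with False show ?thesis
    by (simp add: coxeter_angle_def odd_entry_def)
qed

lemma tits_reflection_braid:
  assumes "finite S" "coxeter_matrix S M" "s \<in> S" "t \<in> S" "s \<noteq> t" "M s t = enat m"
  shows "foldr (form_reflection S (tits_form M)) (alternating s t m) =
         foldr (form_reflection S (tits_form M)) (alternating t s m)"
proof -
  have "M s s = 1" "M t t = 1" "M t s = M s t" "M s t \<ge> 2"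
    using assms(2-5) by (auto simp: coxeter_matrix_def)
  then interpret reflection_pair S "tits_form M" s t "coxeter_angle (M s t)"
    using assms sin_coxeter_angle_ne_0
    by unfold_locales (auto simp: tits_form_diag tits_form_def[of M s t] tits_form_def[of M t s])
  show ?thesis
    using assms(6) by (intro braid_relation) (simp add: sin_mult_coxeter_angle)
qed

lemma tits_reflection_artin_eq:
  assumes "finite S" "coxeter_matrix S M" "artin_eq S M w w'"
  shows "foldr (form_reflection S (tits_form M)) (map fst w) =
         foldr (form_reflection S (tits_form M)) (map fst w')"
proof -
  have "form_reflection S (tits_form M) s (form_reflection S (tits_form M) s v) = v" if "s \<in> S" for s v
    using assms(1,2) that by (intro form_reflection_involutive) (auto simp: coxeter_matrix_def tits_form_diag)
  from foldr_artin_eq[OF this tits_reflection_braid[OF assms(1,2)] assms(3)] show ?thesis .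
qed

lemma foldr_form_reflection_basis:
  assumes "finite S" "b \<in> S" "B b b = 1" "B c b = 0" "set xs \<subseteq> {b, c}"
  shows "foldr (form_reflection S B) xs (\<lambda>u. if u = b then r else 0) =
         (\<lambda>u. if u = b then (-1) ^ count_list xs b * r else 0)"
  using assms(5)
proof (induction xs)
  case Nil
  then show ?case by (simp add: fun_eq_iff)
next
  case (Cons x xs)
  let ?r = "(-1) ^ count_list xs b * r"
  have coord: "form_coord S B y (\<lambda>u. if u = b then ?r else 0) = B y b * ?r" for y
    using assms(1,2) by (simp add: form_coord_def if_distrib cong: if_cong)
  have step: "foldr (form_reflection S B) (x # xs) (\<lambda>u. if u = b then r else 0) =
      form_reflection S B x (\<lambda>u. if u = b then ?r else 0)"
    using Cons by simp
  have "c \<noteq> b"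
    using assms(3,4) by auto
  have "x = b \<or> x = c"
    using Cons.prems by simp
  then show ?case
    using \<open>c \<noteq> b\<close> assms(3,4) unfolding step
    by (auto simp: form_reflection_def coord fun_eq_iff)
qed

lemma artin_eq_letter_parity:
  assumes "finite S" "coxeter_matrix S M" "b \<in> S" "c \<in> S" "\<not> odd_entry (M b c)"
    and "artin_eq S M w w'" "set (map fst w) \<subseteq> {b, c}" "set (map fst w') \<subseteq> {b, c}"
  shows "even (count_list (map fst w) b) = even (count_list (map fst w') b)"
proof -
  let ?e = "\<lambda>u. if u = b then 1 else 0 :: real"
  have "tits_form M b b = 1" "tits_form M c b = 0"
    using assms(2-5) by (auto simp: coxeter_matrix_def tits_form_diag tits_form_not_odd)
  note basis = foldr_form_reflection_basis[where B = "tits_form M" and r = 1, OF assms(1,3) this]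
  have "foldr (form_reflection S (tits_form M)) (map fst w) ?e b =
      foldr (form_reflection S (tits_form M)) (map fst w') ?e b"
    using tits_reflection_artin_eq[OF assms(1,2,6)] by simp
  then have "(-1::real) ^ count_list (map fst w) b = (-1) ^ count_list (map fst w') b"
    using basis assms(7,8) by simp
  then show ?thesis
    by (auto simp: minus_one_power_iff split: if_splits)
qed

section \<open>Retractions\<close>

lemma words_concat [simp]: "concat ws \<in> words S \<longleftrightarrow> (\<forall>w\<in>set ws. w \<in> words S)"
  by (auto simp: words_def lists_eq_set)

lemma retraction_onto_hom:
  assumes "retraction_onto G H \<phi>" "H \<subseteq> carrier G"
  shows "\<phi> \<in> hom G G"
  using assms by (auto simp: retraction_onto_def hom_def)

lemma retraction_artin_class:
  assumes ret: "retraction_onto (artin_group S M) H \<phi>" "H \<subseteq> carrier (artin_group S M)"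
    and "w \<in> words S"
    and img: "\<And>l. l \<in> set w \<Longrightarrow> \<sigma> l \<in> words S \<and> \<phi> (artin_class S M [l]) = artin_class S M (\<sigma> l)"
  shows "\<phi> (artin_class S M w) = artin_class S M (concat (map \<sigma> w))"
  using assms(3,4)
proof (induction w)
  case Nil
  have "\<phi> \<one>\<^bsub>artin_group S M\<^esub> = \<one>\<^bsub>artin_group S M\<^esub>"
    using hom_one[OF retraction_onto_hom[OF ret] group_artin_group group_artin_group] .
  then show ?case
    by (simp add: one_artin_group)
next
  case (Cons l w)
  then have "[l] \<in> words S" "w \<in> words S" "\<sigma> l \<in> words S" "concat (map \<sigma> w) \<in> words S"
    by (auto simp: words_concat)
  then have "\<phi> (artin_class S M (l # w)) =
      \<phi> (artin_class S M [l] \<otimes>\<^bsub>artin_group S M\<^esub> artin_class S M w)"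
    by (simp add: mult_artin_class)
  also have "\<dots> = \<phi> (artin_class S M [l]) \<otimes>\<^bsub>artin_group S M\<^esub> \<phi> (artin_class S M w)"
    using \<open>[l] \<in> words S\<close> \<open>w \<in> words S\<close>
    by (intro hom_mult[OF retraction_onto_hom[OF ret]]) (auto simp: carrier_artin_group)
  also have "\<dots> = artin_class S M (\<sigma> l @ concat (map \<sigma> w))"
    using Cons \<open>\<sigma> l \<in> words S\<close> \<open>concat (map \<sigma> w) \<in> words S\<close> by (simp add: mult_artin_class)
  finally show ?case
    by simp
qed

lemma retraction_braid_image:
  assumes ret: "retraction_onto (artin_group S M) H \<phi>" "H \<subseteq> carrier (artin_group S M)"
    and "a \<in> S" "d \<in> S" "a \<noteq> d" "M a d = enat p" "artin_class S M [(d, True)] \<in> H"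
    and "x \<in> words S" "\<phi> (artin_class S M [(a, True)]) = artin_class S M x"
  shows "artin_eq S M (concat (alternating x [(d, True)] p)) (concat (alternating [(d, True)] x p))"
proof -
  define \<sigma> where "\<sigma> l = (if l = (a, True) then x else [l])" for l
  have img: "\<sigma> l \<in> words S \<and> \<phi> (artin_class S M [l]) = artin_class S M (\<sigma> l)"
    if "l \<in> {(a, True), (d, True)}" for l
    using that assms(3-9) ret by (auto simp: \<sigma>_def retraction_onto_def)
  have "artin_eq S M ([] @ alt_word a d p @ []) ([] @ alt_word d a p @ [])"
    using assms(3-6) by (intro artin_eq.braid) auto
  then have "artin_class S M (alt_word a d p) = artin_class S M (alt_word d a p)"
    using alt_word_in_words[OF assms(3,4)] by (simp add: artin_class_eq_iff)
  moreover have image: "\<phi> (artin_class S M (alt_word s t p)) =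
      artin_class S M (concat (alternating (\<sigma> (s, True)) (\<sigma> (t, True)) p))"
    if "{s, t} = {a, d}" for s t
  proof -
    have "set (alt_word s t p) \<subseteq> {(a, True), (d, True)}"
      using set_alternating_subset[of "(s, True)" "(t, True)" p] that
      by (auto simp: alt_word_eq_alternating)
    moreover have "alt_word s t p \<in> words S"
      using that assms(3,4) by (intro alt_word_in_words) auto
    ultimately show ?thesis
      using retraction_artin_class[OF ret, of "alt_word s t p" \<sigma>] img
      by (auto simp: alt_word_eq_alternating map_alternating)
  qed
  ultimately have "artin_class S M (concat (alternating x [(d, True)] p)) =
      artin_class S M (concat (alternating [(d, True)] x p))"
    using image[of a d] image[of d a] assms(5) by (simp add: \<sigma>_def insert_commute)
  moreover have "concat (alternating x [(d, True)] p) \<in> words S"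
    using set_alternating_subset[of x "[(d, True)]" p] assms(4,8) by auto
  ultimately show ?thesis
    by (simp add: artin_class_eq_iff)
qed

lemma odd_braid_letter_parity:
  assumes "finite S" "coxeter_matrix S M" "b \<in> S" "c \<in> S" "\<not> odd_entry (M b c)" "odd p"
    and "set (map fst x) \<subseteq> {b, c}" "d \<in> {b, c}"
    and "artin_eq S M (concat (alternating x [(d, True)] p)) (concat (alternating [(d, True)] x p))"
  shows "even (count_list (map fst x) b) \<longleftrightarrow> d \<noteq> b"
proof -
  define cnt where "cnt w = count_list (map fst w) b" for w :: "('a \<times> bool) list"
  have cnt_concat: "cnt (concat ws) = sum_list (map cnt ws)" for ws
    by (induction ws) (simp_all add: cnt_def)
  obtain k where k: "p = Suc (2 * k)"
    using \<open>odd p\<close> oddE by fastforce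
  have "set (map fst (concat (alternating x [(d, True)] p))) \<subseteq> {b, c}"
    "set (map fst (concat (alternating [(d, True)] x p))) \<subseteq> {b, c}"
    using set_alternating_subset[of x "[(d, True)]" p] set_alternating_subset[of "[(d, True)]" x p]
      assms(7,8) by fastforce+
  then have "even (cnt (concat (alternating x [(d, True)] p))) =
      even (cnt (concat (alternating [(d, True)] x p)))"
    unfolding cnt_def using artin_eq_letter_parity[OF assms(1-5,9)] by blast
  moreover have "cnt (concat (alternating x [(d, True)] p)) + cnt [(d, True)] =
      cnt (concat (alternating [(d, True)] x p)) + cnt x"
    unfolding cnt_concat map_alternating k by (rule sum_list_alternating_odd)
  ultimately have "even (cnt x) = even (cnt [(d, True)])"
    by (metis even_add)
  then show ?thesis
    by (simp add: cnt_def)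
qed

lemma retraction_letter_parity:
  assumes "finite S" "coxeter_matrix S M" "b \<in> S" "c \<in> S" "\<not> odd_entry (M b c)"
    and ret: "retraction_onto (artin_group S M) (parabolic S M {b, c}) \<phi>"
    and "a \<in> S" "d \<in> {b, c}" "a \<noteq> d" "odd_entry (M a d)"
    and "x \<in> lists ({b, c} \<times> UNIV)" "\<phi> (artin_class S M [(a, True)]) = artin_class S M x"
  shows "even (count_list (map fst x) b) \<longleftrightarrow> d \<noteq> b"
proof -
  obtain p where p: "M a d = enat p" "odd p"
    using \<open>odd_entry (M a d)\<close> by (auto simp: odd_entry_def)
  have "artin_class S M [(d, True)] \<in> parabolic S M {b, c}"
    using \<open>d \<in> {b, c}\<close> unfolding parabolic_def by (auto intro: generate.incl)
  moreover have "x \<in> words S"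
    using \<open>x \<in> lists ({b, c} \<times> UNIV)\<close> assms(3,4) by (auto simp: words_def)
  ultimately have "artin_eq S M (concat (alternating x [(d, True)] p))
      (concat (alternating [(d, True)] x p))"
    using assms(3,4,7-9,12) p(1)
    by (intro retraction_braid_image[OF ret parabolic_subset_carrier]) auto
  then show ?thesis
    using assms(1-5,8,11) p(2) by (intro odd_braid_letter_parity) auto
qed

theorem lemma3p2:
  fixes S :: "'a set" and M :: "'a \<Rightarrow> 'a \<Rightarrow> enat" and a b c :: 'a
  assumes "finite S" and "coxeter_matrix S M"
    and "parabolic_retractable S M"
    and "a \<in> S" and "b \<in> S" and "c \<in> S"
    and "a \<noteq> b" and "a \<noteq> c" and "b \<noteq> c"
    and "odd_entry (M a b)" and "odd_entry (M a c)"
  shows "odd_entry (M b c)"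
proof (rule ccontr)
  assume not_odd: "\<not> odd_entry (M b c)"
  obtain \<phi> where ret: "retraction_onto (artin_group S M) (parabolic S M {b, c}) \<phi>"
    using assms(3,5,6) unfolding parabolic_retractable_def by (meson empty_subsetI insert_subset)
  then have "\<phi> (artin_class S M [(a, True)]) \<in> parabolic S M {b, c}"
    using assms(4) by (auto simp: retraction_onto_def hom_def carrier_artin_group)
  then obtain x where x: "x \<in> lists ({b, c} \<times> UNIV)"
      "\<phi> (artin_class S M [(a, True)]) = artin_class S M x"
    using parabolic_subset_classes[of "{b, c}" S M] assms(5,6) by blast
  note parity = retraction_letter_parity[OF assms(1,2,5,6) not_odd ret assms(4) _ _ _ x]
  show False
    using parity[of b] parity[of c] assms(7-11) by simp
qed

end
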